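(* For all $\mathbf w_1,\mathbf w_2\in\mathcal V_{\mathrm{BSSC}}$ with $\mathbf w_1\neq\mathbf w_2$ we have $|\mathbf w_1^\dagger\mathbf w_2|\le1/\sqrt2$, and (for $m\ge1$) equality is attained by some pair. Consequently the minimum chordal distance $\min_{\mathbf w_1\ne\mathbf w_2}\sqrt{1-|\mathbf w_1^\dagger\mathbf w_2|^2}$ of $\mathcal V_{\mathrm{BSSC}}$ equals $1/\sqrt2$, the same as that of $\mathcal V_{\mathrm{BC}}$.
   Context: Fix $m\ge1$, $N=2^m$. Binary vectors are columns over $\mathbb F_2$; $\mathrm{Sym}(r;2)$ is the set of symmetric binary $r\times r$ matrices, $\mathcal G(m,r;2)$ the set of $r$-dimensional subspaces of $\mathbb F_2^m$. Vectors of $\mathbb C^N$ are indexed by $\mathbb F_2^m$; $\dagger$ is conjugate transpose. Whenever a binary expression appears in an exponent of $i$, binary entries are lifted to the integers $0,1$ and the expression is evaluated in $\mathbb Z$ (equivalently mod 4). Echelon data: for $0\le r\le m$ and $H\in\mathcal G(m,r;2)$, let $\mathbf H_{\mathcal I}$ be the unique $m\times r$ binary matrix in column reduced echelon form with column space $H$: there are indices $i_1<\dots<i_r$, $\mathcal I=\{i_1,\dots,i_r\}$, such that rows $i_1,\dots,i_r$ of $\mathbf H_{\mathcal I}$ form $\mathbf I_r$ and column $j$ of $\mathbf H_{\mathcal I}$ is zero in all rows above row $i_j$. Let $\mathbf I_{\tilde{\mathcal I}}$ be the $m\times(m-r)$ matrix whose columns are the standard basis vectors $\mathbf e_i$ with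 $i\notin\mathcal I$, in increasing order of $i$, and put $\mathbf P_{\mathcal I}=[\mathbf H_{\mathcal I}\ \ \mathbf I_{\tilde{\mathcal I}}]\in\mathrm{GL}(m;2)$. (For $r=0$: $H=\{0\}$, $\mathbf P_{\mathcal I}=\mathbf I_m$.) For $\mathbf S_r\in\mathrm{Sym}(r;2)$, $\tilde{\mathbf S}_r\in\mathrm{Sym}(m;2)$ denotes the matrix with $\mathbf S_r$ as its upper-left $r\times r$ block and zeros elsewhere. Binary subspace chirps: let $f(\mathbf v,\mathbf w,r)=\prod_{i=r+1}^m(1+v_i+w_i)$ computed in $\mathbb F_2$ and viewed in $\{0,1\}$. For $\mathbf b\in\mathbb F_2^m$, the binary subspace chirp (BSSC) $\mathbf w_{\mathbf b}=\mathbf w^{H,\mathbf S_r}_{\mathbf b}\in\mathbb C^N$ has entries $\mathbf w_{\mathbf b}(\mathbf a)=2^{-r/2}\,i^{\mathbf u^T\tilde{\mathbf S}_r\mathbf u+2\mathbf b^T\mathbf u}\,f(\mathbf b,\mathbf u,r)$ with $\mathbf u=\mathbf P_{\mathcal I}^{-1}\mathbf a\in\mathbb F_2^m$, for $\mathbf a\in\mathbb F_2^m$. The integer $r$ is its rank. $\mathcal V_{\mathrm{BSSC}}$ is the set of all such vectors over all $0\le r\le m$, $H\in\mathcal G(m,r;2)$, $\mathbf S_r\in\mathrm{Sym}(r;2)$, $\mathbf b\in\mathbb F_2^m$; binary chirps are the BSSCs of rank $r=m$, and $\mathcal V_{\mathrm{BC}}$ is their set. *)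

theory Defs
  imports Complex_Main
begin

text \<open>Binary vectors of F_2^m: functions nat => bool supported on {0..<m}
  (coordinates are 0-indexed: paper index i corresponds to i-1 here).\<close>
definition bvecs :: "nat \<Rightarrow> (nat \<Rightarrow> bool) set" where
  "bvecs m = {v. \<forall>i. m \<le> i \<longrightarrow> \<not> v i}"

text \<open>H is an m x r binary matrix in column reduced echelon form with pivot
  rows piv 0 < ... < piv (r-1) (the index set I).\<close>
definition is_cref :: "nat \<Rightarrow> nat \<Rightarrow> (nat \<Rightarrow> nat \<Rightarrow> bool) \<Rightarrow> (nat \<Rightarrow> nat) \<Rightarrow> bool" where
  "is_cref m r H piv \<longleftrightarrow>
     (\<forall>j<r. piv j < m) \<and>
     (\<forall>j k. j < k \<longrightarrow> k < r \<longrightarrow> piv j < piv k) \<and>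
     (\<forall>j<r. \<forall>k<r. H (piv k) j = (k = j)) \<and>
     (\<forall>j<r. \<forall>i<piv j. \<not> H i j) \<and>
     (\<forall>i j. (m \<le> i \<or> r \<le> j) \<longrightarrow> \<not> H i j)"

text \<open>Non-pivot indices in increasing order (columns of I_{~I}).\<close>
definition nonpiv :: "nat \<Rightarrow> nat \<Rightarrow> (nat \<Rightarrow> nat) \<Rightarrow> nat list" where
  "nonpiv m r piv = filter (\<lambda>i. i \<notin> piv ` {..<r}) [0..<m]"

text \<open>The product P_I u over F_2, with P_I = [H_I  I_{~I}].\<close>
definition Pmul :: "nat \<Rightarrow> nat \<Rightarrow> (nat \<Rightarrow> nat \<Rightarrow> bool) \<Rightarrow> (nat \<Rightarrow> nat) \<Rightarrow> (nat \<Rightarrow> bool) \<Rightarrow> (nat \<Rightarrow> bool)" where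
  "Pmul m r H piv u = (\<lambda>i. i < m \<and>
     odd ((\<Sum>j<r. of_bool (H i j \<and> u j)) +
          (\<Sum>k<m - r. of_bool (nonpiv m r piv ! k = i \<and> u (r + k))) :: nat))"

definition is_symr :: "nat \<Rightarrow> (nat \<Rightarrow> nat \<Rightarrow> bool) \<Rightarrow> bool" where
  "is_symr r S \<longleftrightarrow> (\<forall>i<r. \<forall>j<r. S i j = S j i)"

text \<open>The binary subspace chirp w_b^{H,S_r}, a vector of C^N indexed by F_2^m
  (set to 0 outside bvecs m). The exponent u^T S~_r u + 2 b^T u is evaluated
  in the integers with entries lifted to 0/1; f(b,u,r) = prod_{i>r} (1+b_i+u_i) in F_2.\<close>
definition bssc :: "nat \<Rightarrow> nat \<Rightarrow> (nat \<Rightarrow> nat \<Rightarrow> bool) \<Rightarrow> (nat \<Rightarrow> nat) \<Rightarrow> (nat \<Rightarrow> nat \<Rightarrow> bool)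
                     \<Rightarrow> (nat \<Rightarrow> bool) \<Rightarrow> (nat \<Rightarrow> bool) \<Rightarrow> complex" where
  "bssc m r H piv S b = (\<lambda>a. if a \<in> bvecs m then
     (let u = (THE u. u \<in> bvecs m \<and> Pmul m r H piv u = a) in
        complex_of_real (1 / sqrt (2 ^ r)) *
        \<i> ^ ((\<Sum>i<r. \<Sum>j<r. of_bool (S i j \<and> u i \<and> u j)) + 2 * (\<Sum>i<m. of_bool (b i \<and> u i)))
        * (\<Prod>i\<in>{r..<m}. of_bool (b i = u i)))
     else 0)"

definition V_BSSC :: "nat \<Rightarrow> ((nat \<Rightarrow> bool) \<Rightarrow> complex) set" where
  "V_BSSC m = {bssc m r H piv S b | r H piv S b.
      r \<le> m \<and> is_cref m r H piv \<and> is_symr r S \<and> b \<in> bvecs m}"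

definition V_BC :: "nat \<Rightarrow> ((nat \<Rightarrow> bool) \<Rightarrow> complex) set" where
  "V_BC m = {bssc m m H piv S b | H piv S b.
      is_cref m m H piv \<and> is_symr m S \<and> b \<in> bvecs m}"

definition cinner :: "nat \<Rightarrow> ((nat \<Rightarrow> bool) \<Rightarrow> complex) \<Rightarrow> ((nat \<Rightarrow> bool) \<Rightarrow> complex) \<Rightarrow> complex" where
  "cinner m w1 w2 = (\<Sum>a\<in>bvecs m. cnj (w1 a) * w2 a)"

definition min_chordal :: "nat \<Rightarrow> ((nat \<Rightarrow> bool) \<Rightarrow> complex) set \<Rightarrow> real" where
  "min_chordal m V = Min {sqrt (1 - (cmod (cinner m w1 w2))^2) | w1 w2.
      w1 \<in> V \<and> w2 \<in> V \<and> w1 \<noteq> w2}"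

end

theory Submission
  imports Defs
begin

text \<open>A chirp of rank \<open>r\<close> has modulus \<open>2^(-r/2)\<close> on an affine subspace of \<open>\<bbbF>\<^sub>2\<^sup>m\<close> of size \<open>2\<^sup>r\<close>,
  the image under \<open>P\<^sub>\<I>\<close> of the coset of \<open>\<bbbF>\<^sub>2\<^sup>r\<close> fixed by the tail of \<open>b\<close>, and vanishes elsewhere.
  If two chirps have different supports \<open>A\<^sub>1 \<noteq> A\<^sub>2\<close>, their inner product is at most
  \<open>|A\<^sub>1 \<inter> A\<^sub>2| 2^(-(r\<^sub>1 + r\<^sub>2)/2)\<close>, and this is at most \<open>1/\<surd>2\<close> because two distinct affine subspaces
  of the same size meet in at most half of each.

  If the supports coincide, uniqueness of the column reduced echelon form forces equal ranks and
  equal \<open>P\<^sub>\<I>\<close>, and the inner product becomes \<open>2^(-r) \<Sigma>\<^sub>h g(h)\<close> over \<open>\<bbbF>\<^sub>2\<^sup>r\<close> for a unimodular \<open>g\<close>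
  with \<open>g(h + w) = g(h) g(w) (-1)^B(h,w)\<close>, \<open>B\<close> symmetric bilinear. Squaring collapses
  \<open>|\<Sigma> g|\<^sup>2\<close> to \<open>2\<^sup>r \<Sigma>\<^sub>w g(w)\<close> over the radical of \<open>B\<close>. If the radical is proper it has index at
  least 2 and \<open>|\<Sigma> g|\<^sup>2 \<le> 4\<^sup>r/2\<close>; otherwise \<open>\<Sigma> g\<close> is \<open>0\<close> or \<open>2\<^sup>r\<close>, and the latter forces \<open>g = 1\<close>,
  i.e. equal chirps. Equality is attained by the binary chirps with \<open>S = 0\<close> and \<open>S = e\<^sub>1e\<^sub>1\<^sup>T\<close>, whose
  inner product is \<open>(1 + i)/2\<close>.\<close>

definition bxor :: "(nat \<Rightarrow> bool) \<Rightarrow> (nat \<Rightarrow> bool) \<Rightarrow> nat \<Rightarrow> bool" (infixl \<open>\<oplus>\<close> 65) where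
  "u \<oplus> v = (\<lambda>i. u i \<noteq> v i)"

lemma bxor_apply [simp]: "(u \<oplus> v) i = (u i \<noteq> v i)"
  by (simp add: bxor_def)

lemma bxor_commute: "u \<oplus> v = v \<oplus> u"
  by (auto simp: fun_eq_iff)

lemma bxor_self [simp]: "u \<oplus> u = (\<lambda>_. False)"
  by (auto simp: fun_eq_iff)

lemma bxor_zero [simp]: "u \<oplus> (\<lambda>_. False) = u" "(\<lambda>_. False) \<oplus> u = u"
  by (auto simp: fun_eq_iff)

lemma bxor_cancel [simp]: "u \<oplus> v \<oplus> v = u" "v \<oplus> (v \<oplus> u) = u" "v \<oplus> (u \<oplus> v) = u"
  by (auto simp: fun_eq_iff)

lemma bvecs_iff: "v \<in> bvecs m \<longleftrightarrow> (\<forall>i. v i \<longrightarrow> i < m)"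
  unfolding bvecs_def by (auto simp: not_le)

lemma bvecs_zero [simp]: "(\<lambda>_. False) \<in> bvecs m"
  by (simp add: bvecs_iff)

lemma bvecs_bxor [intro]: "u \<in> bvecs m \<Longrightarrow> v \<in> bvecs m \<Longrightarrow> u \<oplus> v \<in> bvecs m"
  by (auto simp: bvecs_iff)

lemma bvecs_mono: "r \<le> m \<Longrightarrow> u \<in> bvecs r \<Longrightarrow> u \<in> bvecs m"
  by (auto simp: bvecs_iff)

lemma bvecs_eq_image_Pow: "bvecs m = (\<lambda>A i. i \<in> A) ` Pow {..<m}"
proof
  show "bvecs m \<subseteq> (\<lambda>A i. i \<in> A) ` Pow {..<m}"
  proof
    fix v assume "v \<in> bvecs m"
    then have "{i. v i} \<in> Pow {..<m}" "v = (\<lambda>i. i \<in> {i. v i})" by (auto simp: bvecs_iff)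
    then show "v \<in> (\<lambda>A i. i \<in> A) ` Pow {..<m}" by blast
  qed
qed (auto simp: bvecs_iff)

lemma finite_bvecs [simp]: "finite (bvecs m)"
  by (simp add: bvecs_eq_image_Pow)

lemma card_bvecs: "card (bvecs m) = 2 ^ m"
proof -
  have "inj_on (\<lambda>A i. i \<in> A) (Pow {..<m})"
    by (rule inj_onI) (metis (mono_tags) Collect_mem_eq)
  then show ?thesis by (simp add: bvecs_eq_image_Pow card_image card_Pow)
qed

lemma bij_betw_bxor: "w \<in> bvecs m \<Longrightarrow> bij_betw (\<lambda>u. u \<oplus> w) (bvecs m) (bvecs m)"
  by (rule bij_betw_byWitness[where f'="\<lambda>u. u \<oplus> w"]) auto

definition xor_affine :: "(nat \<Rightarrow> bool) set \<Rightarrow> bool" where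
  "xor_affine A \<longleftrightarrow> (\<forall>a\<in>A. \<forall>b\<in>A. \<forall>c\<in>A. a \<oplus> b \<oplus> c \<in> A)"

lemma xor_affine_bvecs: "xor_affine (bvecs m)"
  unfolding xor_affine_def by auto

lemma xor_affine_Int: "xor_affine A \<Longrightarrow> xor_affine B \<Longrightarrow> xor_affine (A \<inter> B)"
  unfolding xor_affine_def by blast

lemma card_proper_affine_subset:
  assumes "finite A" "xor_affine A" "xor_affine B" "B \<subseteq> A" "B \<noteq> A" "B \<noteq> {}"
  shows "2 * card B \<le> card A"
proof -
  obtain b0 t where b0: "b0 \<in> B" and t: "t \<in> A" "t \<notin> B" using assms(4-6) by blast
  define \<phi> where "\<phi> x = x \<oplus> b0 \<oplus> t" for x
  have "\<phi> ` B \<subseteq> A - B"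
  proof
    fix y assume "y \<in> \<phi> ` B"
    then obtain x where x: "x \<in> B" "y = \<phi> x" by blast
    have "y \<in> A" using assms(2,4) x b0 t(1) unfolding xor_affine_def \<phi>_def by blast
    moreover have "y \<oplus> b0 \<oplus> x = t" unfolding x(2) \<phi>_def by (auto simp: fun_eq_iff)
    then have "y \<notin> B" using assms(3) x(1) b0 t(2) unfolding xor_affine_def by metis
    ultimately show "y \<in> A - B" by blast
  qed
  moreover have "inj_on \<phi> B" unfolding \<phi>_def by (rule inj_onI) (metis bxor_cancel(1))
  ultimately have "card B \<le> card (A - B)"
    by (metis assms(1) card_image card_mono finite_Diff)
  then show ?thesis using assms(1,4) by (simp add: card_Diff_subset finite_subset)
qed

lemma card_affine_Int:
  assumes "finite A1" "finite A2" "card A1 = card A2" "A1 \<noteq> A2" "xor_affine A1" "xor_affine A2"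
  shows "2 * card (A1 \<inter> A2) \<le> card A1"
proof (cases "A1 \<inter> A2 = {}")
  case False
  have "\<not> A1 \<subseteq> A2" using card_subset_eq[OF assms(2) _ assms(3)] assms(4) by blast
  then have "A1 \<inter> A2 \<noteq> A1" by blast
  with False show ?thesis
    using card_proper_affine_subset[OF assms(1,5) xor_affine_Int[OF assms(5,6)]] by blast
qed simp

lemma sum_of_bool_bxor:
  "(\<Sum>j\<in>A. of_bool (P j \<and> (u j \<noteq> v j)) :: nat) + 2 * (\<Sum>j\<in>A. of_bool (P j \<and> u j \<and> v j))
     = (\<Sum>j\<in>A. of_bool (P j \<and> u j)) + (\<Sum>j\<in>A. of_bool (P j \<and> v j))"
  by (simp add: sum_distrib_left sum.distrib[symmetric]) (rule sum.cong, auto)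

lemma Pmul_bxor: "Pmul m r H piv (u \<oplus> v) = Pmul m r H piv u \<oplus> Pmul m r H piv v"
proof
  fix i
  have parity: "odd (a + a') \<longleftrightarrow> odd (x + x') \<noteq> odd (y + y')"
    if "a + 2 * c = x + y" "a' + 2 * c' = x' + y'" for a a' c c' x x' y y' :: nat
    using that by presburger
  let ?X1 = "\<lambda>u. (\<Sum>j<r. of_bool (H i j \<and> u j)) :: nat"
  let ?X2 = "\<lambda>u. (\<Sum>k<m - r. of_bool (nonpiv m r piv ! k = i \<and> u (r + k))) :: nat"
  have "?X1 (u \<oplus> v) + 2 * (\<Sum>j<r. of_bool (H i j \<and> u j \<and> v j)) = ?X1 u + ?X1 v"
    using sum_of_bool_bxor[of "H i" u v "{..<r}"] by simp
  moreover have "?X2 (u \<oplus> v) + 2 * (\<Sum>k<m - r. of_bool (nonpiv m r piv ! k = i \<and> u (r + k) \<and> v (r + k)))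
      = ?X2 u + ?X2 v"
    using sum_of_bool_bxor[of "\<lambda>k. nonpiv m r piv ! k = i" "\<lambda>k. u (r + k)" "\<lambda>k. v (r + k)" "{..<m - r}"]
    by simp
  ultimately have "odd (?X1 (u \<oplus> v) + ?X2 (u \<oplus> v)) \<longleftrightarrow> odd (?X1 u + ?X2 u) \<noteq> odd (?X1 v + ?X2 v)"
    by (rule parity)
  then show "Pmul m r H piv (u \<oplus> v) i = (Pmul m r H piv u \<oplus> Pmul m r H piv v) i"
    unfolding Pmul_def by auto
qed

lemma Pmul_zero [simp]: "Pmul m r H piv (\<lambda>_. False) = (\<lambda>_. False)"
  using Pmul_bxor[of m r H piv "\<lambda>_. False" "\<lambda>_. False"] by simp

lemma Pmul_bvecs: "Pmul m r H piv u \<in> bvecs m"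
  unfolding Pmul_def bvecs_iff by auto

lemma sum_of_bool_eq_single:
  "j < (r::nat) \<Longrightarrow> (\<Sum>j'<r. of_bool (P j' \<and> j' = j) :: nat) = of_bool (P j)"
  by (subst sum.cong[OF refl, of _ _ "\<lambda>j'. if j' = j then of_bool (P j) else 0"]) auto

lemma Pmul_low:
  assumes "h \<in> bvecs r"
  shows "Pmul m r H piv h i \<longleftrightarrow> i < m \<and> odd (\<Sum>j<r. of_bool (H i j \<and> h j) :: nat)"
proof -
  have "(\<Sum>k<m - r. of_bool (nonpiv m r piv ! k = i \<and> h (r + k)) :: nat) = 0"
    using assms by (auto simp: bvecs_iff)
  then show ?thesis unfolding Pmul_def by simp
qed

lemma Pmul_unit: "j < r \<Longrightarrow> Pmul m r H piv (\<lambda>i. i = j) i \<longleftrightarrow> i < m \<and> H i j"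
  using Pmul_low[of "\<lambda>i. i = j" r m H piv i] sum_of_bool_eq_single[of j r "H i"]
  by (simp add: bvecs_iff)

locale cref =
  fixes m r :: nat and H :: "nat \<Rightarrow> nat \<Rightarrow> bool" and piv :: "nat \<Rightarrow> nat"
  assumes cref: "is_cref m r H piv" and rank_le: "r \<le> m"
begin

abbreviation P where "P \<equiv> Pmul m r H piv"
abbreviation np where "np \<equiv> nonpiv m r piv"

lemma piv_less: "j < r \<Longrightarrow> piv j < m"
  using cref unfolding is_cref_def by auto

lemma piv_strict_mono: "j < k \<Longrightarrow> k < r \<Longrightarrow> piv j < piv k"
  using cref unfolding is_cref_def by auto

lemma H_pivot: "j < r \<Longrightarrow> k < r \<Longrightarrow> H (piv k) j \<longleftrightarrow> k = j"
  using cref unfolding is_cref_def by auto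

lemma H_above_pivot: "j < r \<Longrightarrow> i < piv j \<Longrightarrow> \<not> H i j"
  using cref unfolding is_cref_def by auto

lemma inj_on_piv: "inj_on piv {..<r}"
  by (rule inj_onI) (metis lessThan_iff linorder_neqE_nat less_irrefl piv_strict_mono)

lemma length_np: "length np = m - r"
proof -
  have "length np = card (set np)" by (rule distinct_card[symmetric]) (simp add: nonpiv_def)
  also have "\<dots> = card ({..<m} - piv ` {..<r})" by (simp add: nonpiv_def set_diff_eq lessThan_def)
  also have "\<dots> = m - r"
    using piv_less inj_on_piv by (simp add: card_Diff_subset image_subset_iff card_image)
  finally show ?thesis .
qed

lemma np_nth: "k < m - r \<Longrightarrow> np ! k < m \<and> np ! k \<notin> piv ` {..<r}"
  using length_np nth_mem[of k np] by (auto simp: nonpiv_def)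

lemma Pmul_pivot: "k < r \<Longrightarrow> P u (piv k) = u k"
proof -
  assume k: "k < r"
  have "(\<Sum>j<r. of_bool (H (piv k) j \<and> u j) :: nat) = (\<Sum>j<r. of_bool (u j \<and> j = k))"
    by (rule sum.cong) (use k H_pivot in auto)
  moreover have "(\<Sum>k'<m - r. of_bool (np ! k' = piv k \<and> u (r + k')) :: nat) = 0"
    using np_nth k by auto
  ultimately show ?thesis unfolding Pmul_def using k piv_less sum_of_bool_eq_single[OF k] by simp
qed

lemma Pmul_nonpivot: "k < m - r \<Longrightarrow> \<forall>j<r. \<not> u j \<Longrightarrow> P u (np ! k) = u (r + k)"
proof -
  assume k: "k < m - r" and low: "\<forall>j<r. \<not> u j"
  have "(\<Sum>k'<m - r. of_bool (np ! k' = np ! k \<and> u (r + k')) :: nat) = (\<Sum>k'<m - r. of_bool (u (r + k') \<and> k' = k))"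
    by (rule sum.cong) (use k length_np in \<open>auto simp: nth_eq_iff_index_eq nonpiv_def\<close>)
  then show ?thesis unfolding Pmul_def using low k np_nth sum_of_bool_eq_single[OF k] by simp
qed

lemma Pmul_eq_zero: "u \<in> bvecs m \<Longrightarrow> P u = (\<lambda>_. False) \<Longrightarrow> u = (\<lambda>_. False)"
proof
  fix i assume u: "u \<in> bvecs m" and Pu: "P u = (\<lambda>_. False)"
  have low: "\<forall>j<r. \<not> u j" using Pmul_pivot Pu by metis
  show "u i = False"
  proof (cases "r \<le> i \<and> i < m")
    case True
    then have "P u (np ! (i - r)) = u i" using Pmul_nonpivot[OF _ low, of "i - r"] by auto
    then show ?thesis using Pu by simp
  qed (use u low in \<open>auto simp: bvecs_iff\<close>)
qed

lemma inj_on_Pmul: "inj_on P (bvecs m)"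
proof (rule inj_onI)
  fix u v assume "u \<in> bvecs m" "v \<in> bvecs m" "P u = P v"
  then have "u \<oplus> v = (\<lambda>_. False)" using Pmul_eq_zero by (simp add: Pmul_bxor bvecs_bxor)
  then show "u = v" by (metis bxor_cancel(1) bxor_zero(2) bxor_commute)
qed

lemma bij_Pmul: "bij_betw P (bvecs m) (bvecs m)"
proof -
  have "P ` bvecs m = bvecs m"
    using inj_on_Pmul Pmul_bvecs by (simp add: card_image card_subset_eq image_subsetI)
  then show ?thesis using inj_on_Pmul by (simp add: bij_betw_def)
qed

lemma the_Pmul: "u \<in> bvecs m \<Longrightarrow> (THE v. v \<in> bvecs m \<and> P v = P u) = u"
  using inj_on_Pmul by (auto intro!: the_equality dest: inj_onD)

end

section \<open>Sums of quadratic phases over \<open>\<bbbF>\<^sub>2\<^sup>r\<close>\<close>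

lemma cnj_mult_self_unimodular: "cmod z = 1 \<Longrightarrow> cnj z * z = 1"
  by (metis complex_norm_square mult.commute of_real_1 power_one)

locale quadratic_phase =
  fixes r :: nat and g :: "(nat \<Rightarrow> bool) \<Rightarrow> complex" and \<chi> :: "(nat \<Rightarrow> bool) \<Rightarrow> (nat \<Rightarrow> bool) \<Rightarrow> real"
  assumes unimodular: "h \<in> bvecs r \<Longrightarrow> cmod (g h) = 1"
    and g_bxor: "h \<in> bvecs r \<Longrightarrow> w \<in> bvecs r \<Longrightarrow> g (h \<oplus> w) = g h * g w * of_real (\<chi> h w)"
    and sign_values: "h \<in> bvecs r \<Longrightarrow> w \<in> bvecs r \<Longrightarrow> \<chi> h w = 1 \<or> \<chi> h w = -1"
    and sign_sym: "h \<in> bvecs r \<Longrightarrow> w \<in> bvecs r \<Longrightarrow> \<chi> h w = \<chi> w h"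
    and sign_bxor: "h \<in> bvecs r \<Longrightarrow> h' \<in> bvecs r \<Longrightarrow> w \<in> bvecs r \<Longrightarrow> \<chi> (h \<oplus> h') w = \<chi> h w * \<chi> h' w"
begin

definition radical :: "(nat \<Rightarrow> bool) set" where
  "radical = {w \<in> bvecs r. \<forall>u\<in>bvecs r. \<chi> u w = 1}"

lemma radical_subset: "radical \<subseteq> bvecs r"
  by (auto simp: radical_def)

lemma sign_bxor_right:
  "h \<in> bvecs r \<Longrightarrow> w \<in> bvecs r \<Longrightarrow> w' \<in> bvecs r \<Longrightarrow> \<chi> h (w \<oplus> w') = \<chi> h w * \<chi> h w'"
  using sign_sym sign_bxor by (metis bvecs_bxor)

lemma xor_affine_radical: "xor_affine radical"
  unfolding xor_affine_def radical_def by (auto simp: sign_bxor_right bvecs_bxor)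

lemma sum_sign: "w \<in> bvecs r \<Longrightarrow> (\<Sum>u\<in>bvecs r. \<chi> u w) = (if w \<in> radical then 2 ^ r else 0)"
proof (cases "w \<in> radical")
  case True then show ?thesis by (simp add: radical_def card_bvecs)
next
  case False
  assume w: "w \<in> bvecs r"
  then obtain u0 where u0: "u0 \<in> bvecs r" "\<chi> u0 w = -1"
    using False sign_values unfolding radical_def by blast
  have "(\<Sum>u\<in>bvecs r. \<chi> u w) = (\<Sum>u\<in>bvecs r. \<chi> (u \<oplus> u0) w)"
    using sum.reindex_bij_betw[OF bij_betw_bxor[OF u0(1)], of "\<lambda>u. \<chi> u w"] by simp
  also have "\<dots> = (\<Sum>u\<in>bvecs r. - \<chi> u w)"
    by (rule sum.cong) (use sign_bxor u0 w in auto)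
  finally show ?thesis using False by (simp add: sum_negf)
qed

text \<open>Expanding \<open>|\<Sigma> g|\<^sup>2\<close> and substituting \<open>v = w \<oplus> u\<close> turns the double sum into
  \<open>\<Sigma>\<^sub>w g(w) \<Sigma>\<^sub>u \<chi>(u, w)\<close>, and the inner sum vanishes off the radical.\<close>

lemma norm_sum_squared:
  "complex_of_real ((cmod (\<Sum>h\<in>bvecs r. g h))\<^sup>2) = 2 ^ r * (\<Sum>w\<in>radical. g w)"
proof -
  let ?G = "bvecs r"
  have inner: "(\<Sum>v\<in>?G. cnj (g u) * g v) = (\<Sum>w\<in>?G. g w * of_real (\<chi> u w))" if u: "u \<in> ?G" for u
  proof -
    have "(\<Sum>v\<in>?G. cnj (g u) * g v) = (\<Sum>w\<in>?G. cnj (g u) * g (w \<oplus> u))"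
      using sum.reindex_bij_betw[OF bij_betw_bxor[OF u], of "\<lambda>v. cnj (g u) * g v"] by simp
    also have "\<dots> = (\<Sum>w\<in>?G. (cnj (g u) * g u) * g w * of_real (\<chi> u w))"
    proof (rule sum.cong)
      fix w assume "w \<in> ?G"
      then have "g (w \<oplus> u) = g u * g w * of_real (\<chi> u w)" using g_bxor[OF u] by (metis bxor_commute)
      then show "cnj (g u) * g (w \<oplus> u) = (cnj (g u) * g u) * g w * of_real (\<chi> u w)" by (simp add: mult.assoc)
    qed simp
    finally show ?thesis using cnj_mult_self_unimodular[OF unimodular[OF u]] by simp
  qed
  have "complex_of_real ((cmod (\<Sum>h\<in>?G. g h))\<^sup>2) = cnj (\<Sum>h\<in>?G. g h) * (\<Sum>h\<in>?G. g h)"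
    by (metis complex_norm_square mult.commute)
  also have "\<dots> = (\<Sum>u\<in>?G. \<Sum>v\<in>?G. cnj (g u) * g v)"
    unfolding cnj_sum sum_product ..
  also have "\<dots> = (\<Sum>u\<in>?G. \<Sum>w\<in>?G. g w * of_real (\<chi> u w))"
    using inner by simp
  also have "\<dots> = (\<Sum>w\<in>?G. g w * of_real (\<Sum>u\<in>?G. \<chi> u w))"
    by (subst sum.swap) (simp add: sum_distrib_left)
  also have "\<dots> = (\<Sum>w\<in>?G. if w \<in> radical then 2 ^ r * g w else 0)"
    by (rule sum.cong) (simp_all add: sum_sign)
  also have "\<dots> = 2 ^ r * (\<Sum>w\<in>radical. g w)"
    using radical_subset by (simp add: sum.If_cases Int_absorb1 sum_distrib_left)
  finally show ?thesis .
qed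

lemma sum_eq_card_imp_one:
  assumes "(\<Sum>h\<in>bvecs r. g h) = 2 ^ r"
  shows "\<forall>h\<in>bvecs r. g h = 1"
proof (rule ccontr)
  assume "\<not> (\<forall>h\<in>bvecs r. g h = 1)"
  then obtain h where h: "h \<in> bvecs r" "g h \<noteq> 1" by blast
  have le: "Re (g x) \<le> 1" if "x \<in> bvecs r" for x
    using unimodular[OF that] complex_Re_le_cmod by metis
  have "Re (g h) \<noteq> 1"
    using h unimodular[OF h(1)] cmod_power2[of "g h"] by (auto simp: complex_eq_iff)
  with le[OF h(1)] have "(\<Sum>x\<in>bvecs r. Re (g x)) < (\<Sum>x\<in>bvecs r. 1)"
    using sum_strict_mono_ex1[of "bvecs r" "\<lambda>x. Re (g x)" "\<lambda>_. 1"] le h(1) by force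
  moreover have "(\<Sum>x\<in>bvecs r. Re (g x)) = 2 ^ r"
    using arg_cong[OF assms, of Re] by (simp add: Re_sum)
  ultimately show False by (simp add: card_bvecs)
qed

theorem norm_sum_bound:
  "(\<forall>h\<in>bvecs r. g h = 1) \<or> (cmod (\<Sum>h\<in>bvecs r. g h))\<^sup>2 \<le> (2 ^ r)\<^sup>2 / 2"
proof (cases "radical = bvecs r")
  case True
  define s where "s = (\<Sum>h\<in>bvecs r. g h)"
  have "complex_of_real ((cmod s)\<^sup>2) = 2 ^ r * s"
    using norm_sum_squared True unfolding s_def by simp
  then have "(cmod s)\<^sup>2 = 2 ^ r * cmod s"
    by (metis norm_mult norm_numeral norm_of_real norm_power abs_norm_cancel)
  then have "s = 0 \<or> cmod s = 2 ^ r" by (simp add: power2_eq_square)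
  then show ?thesis
  proof
    assume "cmod s = 2 ^ r"
    with \<open>complex_of_real ((cmod s)\<^sup>2) = 2 ^ r * s\<close> have "s = 2 ^ r"
      by (simp add: power2_eq_square)
    then show ?thesis using sum_eq_card_imp_one unfolding s_def by blast
  qed (simp add: s_def)
next
  case False
  have "\<chi> (\<lambda>_. False) u = 1" if "u \<in> bvecs r" for u
    using sign_bxor[of "\<lambda>_. False" "\<lambda>_. False" u] sign_values[of "\<lambda>_. False" u] that by auto
  then have "(\<lambda>_. False) \<in> radical"
    unfolding radical_def using sign_sym by auto
  then have half: "2 * card radical \<le> 2 ^ r"
    using card_proper_affine_subset[OF finite_bvecs xor_affine_bvecs xor_affine_radical radical_subset False]
    by (auto simp: card_bvecs)
  have "(cmod (\<Sum>h\<in>bvecs r. g h))\<^sup>2 = 2 ^ r * cmod (\<Sum>w\<in>radical. g w)"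
    using arg_cong[OF norm_sum_squared, of cmod] by (simp add: norm_mult norm_power)
  also have "\<dots> \<le> 2 ^ r * (\<Sum>w\<in>radical. cmod (g w))"
    by (simp add: norm_sum)
  also have "\<dots> = 2 ^ r * card radical"
    using unimodular radical_subset by (simp add: subset_iff)
  also have "\<dots> \<le> 2 ^ r * (2 ^ r / 2)"
    using of_nat_mono[OF half, where 'a=real] by simp
  finally show ?thesis by (simp add: power2_eq_square)
qed

end

definition qform :: "nat \<Rightarrow> (nat \<Rightarrow> nat \<Rightarrow> bool) \<Rightarrow> (nat \<Rightarrow> bool) \<Rightarrow> nat" where
  "qform r S u = (\<Sum>i<r. \<Sum>j<r. of_bool (S i j \<and> u i \<and> u j))"

definition bform :: "nat \<Rightarrow> (nat \<Rightarrow> nat \<Rightarrow> bool) \<Rightarrow> (nat \<Rightarrow> bool) \<Rightarrow> (nat \<Rightarrow> bool) \<Rightarrow> nat" where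
  "bform r S u w = (\<Sum>i<r. \<Sum>j<r. of_bool (S i j \<and> u i \<and> w j))"

definition dotp :: "nat \<Rightarrow> (nat \<Rightarrow> bool) \<Rightarrow> (nat \<Rightarrow> bool) \<Rightarrow> nat" where
  "dotp m b u = (\<Sum>i<m. of_bool (b i \<and> u i))"

text \<open>The entry of the chirp \<open>w\<^sub>b\<^sup>H\<^sup>,\<^sup>S\<close> at \<open>P\<^sub>\<I> u\<close>, without normalisation and support factor.\<close>

definition chirp_phase :: "nat \<Rightarrow> nat \<Rightarrow> (nat \<Rightarrow> nat \<Rightarrow> bool) \<Rightarrow> (nat \<Rightarrow> bool) \<Rightarrow> (nat \<Rightarrow> bool) \<Rightarrow> complex" where
  "chirp_phase m r S b u = \<i> ^ (qform r S u + 2 * dotp m b u)"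

lemma norm_chirp_phase [simp]: "cmod (chirp_phase m r S b u) = 1"
  by (simp add: chirp_phase_def norm_power)

lemma power_i_mod4: "\<i> ^ n = \<i> ^ (n mod 4)"
proof -
  have "\<i> ^ n = (\<i> ^ 4) ^ (n div 4) * \<i> ^ (n mod 4)"
    by (metis div_mult_mod_eq mult.commute power_add power_mult)
  then show ?thesis by (simp add: power4_eq_xxxx)
qed

text \<open>With \<open>x, y\<close> the 0/1 liftings of \<open>u, w\<close>, the lifting of \<open>u \<oplus> w\<close> is \<open>x + y - 2xy\<close>; expanding,
  the mixed terms pair up by the symmetry of \<open>S\<close>, and the remaining terms are antisymmetric in
  \<open>(i, j)\<close> and cancel in the double sum.\<close>

lemma qform_bxor:
  assumes "is_symr r S"
  shows "\<exists>K. int (qform r S (u \<oplus> w)) = int (qform r S u) + int (qform r S w) + 2 * int (bform r S u w) + 4 * K"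
proof -
  define s where "s i j = (of_bool (S i j) :: int)" for i j
  define x where "x i = (of_bool (u i) :: int)" for i
  define y where "y i = (of_bool (w i) :: int)" for i
  define F1 where "F1 i j = s i j * y i * x j" for i j
  define F2 where "F2 i j = s i j * x i * y i * x j" for i j
  define F3 where "F3 i j = s i j * x i * y i * y j" for i j
  define K where "K i j = s i j * x i * y i * x j * y j - F2 i j - F3 i j" for i j
  have antisym: "(\<Sum>i<r. \<Sum>j<r. F i j - F j i) = 0" for F :: "nat \<Rightarrow> nat \<Rightarrow> int"
    using sum.swap[of "\<lambda>i j. F j i" "{..<r}" "{..<r}"] by (simp add: sum_subtractf)
  have entry: "(of_bool (S i j \<and> (u \<oplus> w) i \<and> (u \<oplus> w) j) :: int) =
     (s i j * x i * x j + s i j * y i * y j + 2 * (s i j * x i * y j) + 4 * K i j)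
     + ((F1 i j - F1 j i) + 2 * (F2 i j - F2 j i) + 2 * (F3 i j - F3 j i))" if "i < r" "j < r" for i j
  proof -
    have "S j i = S i j" using assms that unfolding is_symr_def by auto
    then show ?thesis unfolding s_def x_def y_def F1_def F2_def F3_def K_def
      by (cases "S i j"; cases "u i"; cases "w i"; cases "u j"; cases "w j") simp_all
  qed
  have "int (qform r S (u \<oplus> w)) = (\<Sum>i<r. \<Sum>j<r. of_bool (S i j \<and> (u \<oplus> w) i \<and> (u \<oplus> w) j) :: int)"
    unfolding qform_def by simp
  also have "\<dots> = (\<Sum>i<r. \<Sum>j<r. (s i j * x i * x j + s i j * y i * y j + 2 * (s i j * x i * y j) + 4 * K i j)
     + ((F1 i j - F1 j i) + 2 * (F2 i j - F2 j i) + 2 * (F3 i j - F3 j i)))"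
    using entry by simp
  also have "\<dots> = (\<Sum>i<r. \<Sum>j<r. s i j * x i * x j + s i j * y i * y j + 2 * (s i j * x i * y j) + 4 * K i j)
     + ((\<Sum>i<r. \<Sum>j<r. F1 i j - F1 j i) + 2 * (\<Sum>i<r. \<Sum>j<r. F2 i j - F2 j i) + 2 * (\<Sum>i<r. \<Sum>j<r. F3 i j - F3 j i))"
    by (simp add: sum.distrib sum_distrib_left)
  also have "\<dots> = (\<Sum>i<r. \<Sum>j<r. s i j * x i * x j + s i j * y i * y j + 2 * (s i j * x i * y j) + 4 * K i j)"
    by (simp only: antisym mult_zero_right add_0_right)
  also have "\<dots> = int (qform r S u) + int (qform r S w) + 2 * int (bform r S u w) + 4 * (\<Sum>i<r. \<Sum>j<r. K i j)"
    unfolding qform_def bform_def s_def x_def y_def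
    by (simp add: sum.distrib sum_distrib_left of_bool_conj mult.assoc del: sum_of_bool_eq sum_of_bool_mult_eq)
  finally show ?thesis by blast
qed

lemma dotp_bxor: "dotp m b (u \<oplus> w) + 2 * (\<Sum>i<m. of_bool (b i \<and> u i \<and> w i)) = dotp m b u + dotp m b w"
  unfolding dotp_def using sum_of_bool_bxor[of b u w "{..<m}"] by simp

lemma power_i_cong: "int a = int c + 4 * k \<Longrightarrow> \<i> ^ a = \<i> ^ c"
proof -
  assume "int a = int c + 4 * k"
  then have "a mod 4 = c mod 4" by presburger
  then show ?thesis by (metis power_i_mod4)
qed

lemma chirp_phase_bxor:
  assumes "is_symr r S"
  shows "chirp_phase m r S b (u \<oplus> w) = chirp_phase m r S b u * chirp_phase m r S b w * (-1) ^ bform r S u w"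
proof -
  obtain K where K: "int (qform r S (u \<oplus> w)) = int (qform r S u) + int (qform r S w) + 2 * int (bform r S u w) + 4 * K"
    using qform_bxor[OF assms] by blast
  have "int (qform r S (u \<oplus> w) + 2 * dotp m b (u \<oplus> w))
      = int ((qform r S u + 2 * dotp m b u) + (qform r S w + 2 * dotp m b w) + 2 * bform r S u w)
        + 4 * (K - int (\<Sum>i<m. of_bool (b i \<and> u i \<and> w i)))"
    using K dotp_bxor[of m b u w] by simp
  then have "chirp_phase m r S b (u \<oplus> w)
      = \<i> ^ ((qform r S u + 2 * dotp m b u) + (qform r S w + 2 * dotp m b w) + 2 * bform r S u w)"
    unfolding chirp_phase_def by (rule power_i_cong)
  then show ?thesis
    unfolding chirp_phase_def by (simp add: power_add power_mult)
qed

lemma bform_sym: "is_symr r S \<Longrightarrow> bform r S u w = bform r S w u"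
  unfolding bform_def is_symr_def
  by (subst sum.swap) (intro sum.cong refl, auto)

lemma minus_one_power_bform_bxor:
  "(-1::real) ^ bform r S (h \<oplus> h') w = (-1) ^ bform r S h w * (-1) ^ bform r S h' w"
proof -
  have eq: "bform r S (h \<oplus> h') w + 2 * (\<Sum>i<r. \<Sum>j<r. of_bool (S i j \<and> h i \<and> h' i \<and> w j))
      = bform r S h w + bform r S h' w"
  proof -
    have "(\<Sum>i<r. \<Sum>j<r. of_bool (S i j \<and> (h \<oplus> h') i \<and> w j) + 2 * of_bool (S i j \<and> h i \<and> h' i \<and> w j))
       = (\<Sum>i<r. \<Sum>j<r. of_bool (S i j \<and> h i \<and> w j) + (of_bool (S i j \<and> h' i \<and> w j) :: nat))"
      by (intro sum.cong refl) auto
    then show ?thesis unfolding bform_def by (simp only: sum.distrib sum_distrib_left)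
  qed
  have "(-1::real) ^ bform r S (h \<oplus> h') w
      = (-1) ^ (bform r S (h \<oplus> h') w + 2 * (\<Sum>i<r. \<Sum>j<r. of_bool (S i j \<and> h i \<and> h' i \<and> w j)))"
    by (simp add: power_add power_mult)
  also have "\<dots> = (-1) ^ bform r S h w * (-1) ^ bform r S h' w"
    by (simp only: eq power_add)
  finally show ?thesis .
qed

section \<open>Supports of chirps\<close>

text \<open>The vectors \<open>u\<close> with \<open>f(b, u, r) = 1\<close>.\<close>

definition chirp_coset :: "nat \<Rightarrow> nat \<Rightarrow> (nat \<Rightarrow> bool) \<Rightarrow> (nat \<Rightarrow> bool) set" where
  "chirp_coset m r b = {u \<in> bvecs m. \<forall>i\<in>{r..<m}. b i = u i}"

definition high_part :: "nat \<Rightarrow> (nat \<Rightarrow> bool) \<Rightarrow> nat \<Rightarrow> bool" where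
  "high_part r b = (\<lambda>i. r \<le> i \<and> b i)"

lemma chirp_coset_subset: "chirp_coset m r b \<subseteq> bvecs m"
  by (auto simp: chirp_coset_def)

lemma high_part_in_coset: "b \<in> bvecs m \<Longrightarrow> high_part r b \<in> chirp_coset m r b"
  by (auto simp: chirp_coset_def high_part_def bvecs_iff)

lemma xor_affine_chirp_coset: "xor_affine (chirp_coset m r b)"
  by (auto simp: xor_affine_def chirp_coset_def)

lemma bxor_chirp_coset:
  assumes "u \<in> chirp_coset m r b" "u0 \<in> chirp_coset m r b"
  shows "u \<oplus> u0 \<in> bvecs r"
proof -
  have "i < r" if "(u \<oplus> u0) i" for i
  proof (rule ccontr)
    assume "\<not> i < r"
    have "u \<in> bvecs m" "u0 \<in> bvecs m" using assms by (simp_all add: chirp_coset_def)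
    then have "i < m" using that unfolding bvecs_iff by auto
    then have "u i = u0 i" using assms \<open>\<not> i < r\<close> by (simp add: chirp_coset_def)
    with that show False by simp
  qed
  then show ?thesis by (simp add: bvecs_iff)
qed

lemma bxor_image_chirp_coset:
  assumes "r \<le> m" "u0 \<in> chirp_coset m r b"
  shows "(\<lambda>u. u \<oplus> u0) ` chirp_coset m r b = bvecs r"
proof
  show "(\<lambda>u. u \<oplus> u0) ` chirp_coset m r b \<subseteq> bvecs r"
    using bxor_chirp_coset[OF _ assms(2)] by blast
  show "bvecs r \<subseteq> (\<lambda>u. u \<oplus> u0) ` chirp_coset m r b"
  proof
    fix h assume "h \<in> bvecs r"
    then have "h \<oplus> u0 \<in> chirp_coset m r b"
      using assms bvecs_mono[OF assms(1)] by (auto simp: chirp_coset_def bvecs_iff)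
    then show "h \<in> (\<lambda>u. u \<oplus> u0) ` chirp_coset m r b" by (rule rev_image_eqI) simp
  qed
qed

lemma bij_betw_chirp_coset:
  assumes "r \<le> m" "b \<in> bvecs m"
  shows "bij_betw (\<lambda>h. h \<oplus> high_part r b) (bvecs r) (chirp_coset m r b)"
proof (rule bij_betw_byWitness[where f'="\<lambda>h. h \<oplus> high_part r b"])
  have image: "(\<lambda>u. u \<oplus> high_part r b) ` chirp_coset m r b = bvecs r"
    by (rule bxor_image_chirp_coset[OF assms(1) high_part_in_coset[OF assms(2)]])
  then show "(\<lambda>h. h \<oplus> high_part r b) ` chirp_coset m r b \<subseteq> bvecs r" by simp
  have "(\<lambda>h. h \<oplus> high_part r b) ` bvecs r
      = (\<lambda>h. h \<oplus> high_part r b) ` (\<lambda>u. u \<oplus> high_part r b) ` chirp_coset m r b"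
    by (simp only: image)
  then show "(\<lambda>h. h \<oplus> high_part r b) ` bvecs r \<subseteq> chirp_coset m r b" by (simp add: image_image)
qed simp_all

lemma card_chirp_coset: "r \<le> m \<Longrightarrow> b \<in> bvecs m \<Longrightarrow> card (chirp_coset m r b) = 2 ^ r"
  using bij_betw_same_card[OF bij_betw_chirp_coset] card_bvecs by metis

lemma chirp_coset_eq_iff:
  assumes "b1 \<in> bvecs m"
  shows "chirp_coset m r b1 = chirp_coset m r b2 \<longleftrightarrow> (\<forall>i\<in>{r..<m}. b1 i = b2 i)"
proof
  assume "chirp_coset m r b1 = chirp_coset m r b2"
  then have "high_part r b1 \<in> chirp_coset m r b2" using high_part_in_coset[OF assms, of r] by simp
  then show "\<forall>i\<in>{r..<m}. b1 i = b2 i" by (auto simp: chirp_coset_def high_part_def)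
qed (auto simp: chirp_coset_def)

definition chirp_support :: "nat \<Rightarrow> nat \<Rightarrow> (nat \<Rightarrow> nat \<Rightarrow> bool) \<Rightarrow> (nat \<Rightarrow> nat) \<Rightarrow> (nat \<Rightarrow> bool) \<Rightarrow> (nat \<Rightarrow> bool) set" where
  "chirp_support m r H piv b = Pmul m r H piv ` chirp_coset m r b"

lemma prod_of_bool: "finite A \<Longrightarrow> (\<Prod>i\<in>A. of_bool (P i) :: 'a :: comm_semiring_1) = of_bool (\<forall>i\<in>A. P i)"
  by (induct A rule: finite_induct) auto

lemma bssc_outside: "a \<notin> bvecs m \<Longrightarrow> bssc m r H piv S b a = 0"
  unfolding bssc_def by simp

context cref
begin

lemma bssc_Pmul: "u \<in> bvecs m \<Longrightarrow>
    bssc m r H piv S b (P u) = of_real (1 / sqrt (2 ^ r)) * chirp_phase m r S b u * of_bool (u \<in> chirp_coset m r b)"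
  unfolding bssc_def chirp_phase_def qform_def dotp_def Let_def using Pmul_bvecs the_Pmul
  by (simp add: prod_of_bool chirp_coset_def)

lemma Pmul_mem_chirp_support_iff: "u \<in> bvecs m \<Longrightarrow> P u \<in> chirp_support m r H piv b \<longleftrightarrow> u \<in> chirp_coset m r b"
  unfolding chirp_support_def using inj_on_image_mem_iff[OF inj_on_Pmul _ chirp_coset_subset] by blast

lemma norm_bssc:
  "cmod (bssc m r H piv S b a) = (if a \<in> chirp_support m r H piv b then 1 / sqrt (2 ^ r) else 0)"
proof (cases "a \<in> bvecs m")
  case True
  then obtain u where "u \<in> bvecs m" "a = P u" using bij_Pmul by (metis bij_betw_imp_surj_on imageE)
  then show ?thesis using Pmul_mem_chirp_support_iff by (simp add: bssc_Pmul norm_mult norm_divide)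
next
  case False
  then show ?thesis using Pmul_bvecs by (auto simp: bssc_outside chirp_support_def)
qed

lemma chirp_support_subset: "chirp_support m r H piv b \<subseteq> bvecs m"
  unfolding chirp_support_def using Pmul_bvecs by blast

lemma card_chirp_support: "b \<in> bvecs m \<Longrightarrow> card (chirp_support m r H piv b) = 2 ^ r"
  unfolding chirp_support_def
  using card_image[OF inj_on_subset[OF inj_on_Pmul chirp_coset_subset]] card_chirp_coset[OF rank_le] by simp

lemma xor_affine_chirp_support: "xor_affine (chirp_support m r H piv b)"
  unfolding xor_affine_def chirp_support_def
proof clarify
  fix a b' c assume "a \<in> chirp_coset m r b" "b' \<in> chirp_coset m r b" "c \<in> chirp_coset m r b"
  then have "a \<oplus> b' \<oplus> c \<in> chirp_coset m r b"
    using xor_affine_chirp_coset unfolding xor_affine_def by blast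
  then show "P a \<oplus> P b' \<oplus> P c \<in> P ` chirp_coset m r b" by (simp flip: Pmul_bxor)
qed

end

section \<open>Chirps with different supports\<close>

lemma double_square_le_power_add:
  fixes n :: nat
  assumes "n \<le> 2 ^ r1" "n \<le> 2 ^ r2" "r1 = r2 \<Longrightarrow> 2 * n \<le> 2 ^ r1"
  shows "2 * n\<^sup>2 \<le> 2 ^ (r1 + r2)"
proof -
  have "2 * n \<le> 2 ^ max r1 r2"
  proof (cases "r1 = r2")
    case False
    then have "2 * n \<le> 2 ^ Suc (min r1 r2)" using assms(1,2) by (simp add: min_def)
    also have "\<dots> \<le> 2 ^ max r1 r2" using False by (intro power_increasing) auto
    finally show ?thesis .
  qed (use assms(3) in simp)
  moreover have "n \<le> 2 ^ min r1 r2" using assms(1,2) by (simp add: min_def)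
  ultimately have "(2 * n) * n \<le> 2 ^ max r1 r2 * 2 ^ min r1 r2" by (rule mult_le_mono)
  also have "\<dots> = 2 ^ (r1 + r2)" by (simp add: power_add[symmetric] max_def min_def add.commute)
  finally show ?thesis by (simp add: power2_eq_square)
qed

lemma divide_sqrt_powers_le:
  fixes n :: nat
  assumes "2 * n\<^sup>2 \<le> 2 ^ (r1 + r2)"
  shows "n / (sqrt (2 ^ r1) * sqrt (2 ^ r2)) \<le> 1 / sqrt 2"
proof -
  have "real (2 * n\<^sup>2) \<le> real (2 ^ (r1 + r2))"
    using assms by (simp only: of_nat_le_iff)
  then have "(sqrt 2 * n)\<^sup>2 \<le> (sqrt (2 ^ r1) * sqrt (2 ^ r2))\<^sup>2"
    by (simp add: power_mult_distrib power_add)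
  then have "sqrt 2 * n \<le> sqrt (2 ^ r1) * sqrt (2 ^ r2)"
    by (rule power2_le_imp_le) simp
  moreover have "sqrt (2 ^ r1) * sqrt (2 ^ r2) > 0" by simp
  ultimately show ?thesis by (simp add: divide_simps mult.commute)
qed

lemma norm_cinner_le_distinct_supports:
  fixes w1 w2 :: "(nat \<Rightarrow> bool) \<Rightarrow> complex"
  assumes A: "A1 \<subseteq> bvecs m" "A2 \<subseteq> bvecs m" "card A1 = 2 ^ r1" "card A2 = 2 ^ r2" "A1 \<noteq> A2"
      "xor_affine A1" "xor_affine A2"
    and w: "\<And>a. cmod (w1 a) = (if a \<in> A1 then 1 / sqrt (2 ^ r1) else 0)"
      "\<And>a. cmod (w2 a) = (if a \<in> A2 then 1 / sqrt (2 ^ r2) else 0)"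
  shows "cmod (cinner m w1 w2) \<le> 1 / sqrt 2"
proof -
  have fin: "finite A1" "finite A2" using A(1,2) by (meson finite_bvecs finite_subset)+
  define n where "n = card (A1 \<inter> A2)"
  have "cmod (cinner m w1 w2) \<le> (\<Sum>a\<in>bvecs m. cmod (cnj (w1 a) * w2 a))"
    unfolding cinner_def by (rule norm_sum)
  also have "\<dots> = (\<Sum>a\<in>bvecs m. if a \<in> A1 \<inter> A2 then 1 / sqrt (2 ^ r1) * (1 / sqrt (2 ^ r2)) else 0)"
    by (rule sum.cong) (simp_all add: norm_mult w)
  also have "\<dots> = n / (sqrt (2 ^ r1) * sqrt (2 ^ r2))"
  proof -
    have "bvecs m \<inter> {a \<in> A1. a \<in> A2} = A1 \<inter> A2" using A(1) by auto
    then show ?thesis by (simp add: sum.If_cases n_def)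
  qed
  also have "\<dots> \<le> 1 / sqrt 2"
  proof -
    have "2 * n\<^sup>2 \<le> 2 ^ (r1 + r2)"
    proof (rule double_square_le_power_add)
      show "n \<le> 2 ^ r1" unfolding n_def using card_mono[OF fin(1) Int_lower1] A(3) by simp
      show "n \<le> 2 ^ r2" unfolding n_def using card_mono[OF fin(2) Int_lower2] A(4) by simp
      show "2 * n \<le> 2 ^ r1" if "r1 = r2"
        using card_affine_Int[OF fin A(3)[unfolded that, folded A(4)] A(5-7)] A(3) by (simp add: n_def)
    qed
    then show ?thesis by (rule divide_sqrt_powers_le)
  qed
  finally show ?thesis .
qed

section \<open>Uniqueness of the column reduced echelon form\<close>

definition leading_one :: "nat \<Rightarrow> (nat \<Rightarrow> bool) \<Rightarrow> bool" where
  "leading_one i v \<longleftrightarrow> v i \<and> (\<forall>i'<i. \<not> v i')"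

lemma leading_one_unique: "leading_one i v \<Longrightarrow> leading_one i' v \<Longrightarrow> i = i'"
  unfolding leading_one_def by (metis linorder_neqE_nat)

lemma strict_mono_enum_eq:
  fixes f g :: "nat \<Rightarrow> nat"
  assumes "\<And>j k. j < k \<Longrightarrow> k < r \<Longrightarrow> f j < f k" "\<And>j k. j < k \<Longrightarrow> k < r \<Longrightarrow> g j < g k"
    and "f ` {..<r} = g ` {..<r}" and "j < r"
  shows "f j = g j"
proof -
  have "map f [0..<r] = map g [0..<r]"
    using assms(1-3) by (intro strict_sorted_equal) (auto simp: sorted_wrt_iff_nth_less atLeast0LessThan)
  then show ?thesis using assms(4) by (simp add: list_eq_iff_nth_eq)
qed

context cref
begin

text \<open>Rows above \<open>piv j\<close> only see the columns of \<open>H\<^sub>\<I>\<close> with larger pivots, which vanish there.\<close>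

lemma leading_one_Pmul:
  assumes "h \<in> bvecs r" "j < r" "h j" "\<forall>j'<j. \<not> h j'"
  shows "leading_one (piv j) (P h)"
  unfolding leading_one_def
proof
  show "P h (piv j)" using Pmul_pivot[OF assms(2)] assms(3) by simp
  show "\<forall>i<piv j. \<not> P h i"
  proof (intro allI impI)
    fix i assume i: "i < piv j"
    have "\<not> (H i j' \<and> h j')" if "j' < r" for j'
    proof
      assume "H i j' \<and> h j'"
      then have "\<not> j' < j" using assms(4) by blast
      then have "piv j \<le> piv j'" using piv_strict_mono[of j j'] that by (cases "j = j'") auto
      then show False using H_above_pivot[OF that] i \<open>H i j' \<and> h j'\<close> by simp
    qed
    then have "(\<Sum>j'<r. of_bool (H i j' \<and> h j') :: nat) = 0" by (intro sum.neutral) auto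
    then show "\<not> P h i" using Pmul_low[OF assms(1)] by simp
  qed
qed

lemma pivots_eq_leading_ones: "piv ` {..<r} = {i. \<exists>v\<in>P ` bvecs r. leading_one i v}"
proof
  show "piv ` {..<r} \<subseteq> {i. \<exists>v\<in>P ` bvecs r. leading_one i v}"
  proof
    fix i assume "i \<in> piv ` {..<r}"
    then obtain j where j: "j < r" "i = piv j" by blast
    then have e: "(\<lambda>i. i = j) \<in> bvecs r" by (simp add: bvecs_iff)
    then have "leading_one (piv j) (P (\<lambda>i. i = j))" by (rule leading_one_Pmul) (use j in auto)
    then show "i \<in> {i. \<exists>v\<in>P ` bvecs r. leading_one i v}" using e j by blast
  qed
  show "{i. \<exists>v\<in>P ` bvecs r. leading_one i v} \<subseteq> piv ` {..<r}"
  proof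
    fix i assume "i \<in> {i. \<exists>v\<in>P ` bvecs r. leading_one i v}"
    then obtain h where h: "h \<in> bvecs r" and lead: "leading_one i (P h)" by blast
    have "\<exists>j. h j"
    proof (rule ccontr)
      assume "\<not> (\<exists>j. h j)"
      then have "h = (\<lambda>_. False)" by auto
      then show False using lead by (simp add: leading_one_def)
    qed
    define j where "j = (LEAST j. h j)"
    have "h j" unfolding j_def using \<open>\<exists>j. h j\<close> by (rule LeastI_ex)
    moreover have "\<forall>j'<j. \<not> h j'" unfolding j_def using not_less_Least by blast
    moreover have "j < r" using \<open>h j\<close> h by (simp add: bvecs_iff)
    ultimately have "leading_one (piv j) (P h)" using leading_one_Pmul[OF h] by blast
    then show "i \<in> piv ` {..<r}" using lead leading_one_unique \<open>j < r\<close> by blast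
  qed
qed

lemma bxor_image_chirp_support:
  assumes "x \<in> chirp_support m r H piv b"
  shows "(\<lambda>a. a \<oplus> x) ` chirp_support m r H piv b = P ` bvecs r"
proof -
  obtain u0 where u0: "u0 \<in> chirp_coset m r b" "x = P u0"
    using assms unfolding chirp_support_def by blast
  have "(\<lambda>a. a \<oplus> x) ` chirp_support m r H piv b = P ` (\<lambda>u. u \<oplus> u0) ` chirp_coset m r b"
    unfolding chirp_support_def u0(2) image_image by (simp add: Pmul_bxor)
  also have "\<dots> = P ` bvecs r"
    by (simp only: bxor_image_chirp_coset[OF rank_le u0(1)])
  finally show ?thesis .
qed

end

text \<open>Pivots are the positions of leading ones, and \<open>e\<^sub>j\<close> is the only vector of \<open>\<bbbF>\<^sub>2\<^sup>r\<close> whose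
  image has pivot pattern \<open>e\<^sub>j\<close>.\<close>

lemma Pmul_eq_if_same_image:
  assumes c1: "cref m r H1 piv1" and c2: "cref m r H2 piv2"
    and im: "Pmul m r H1 piv1 ` bvecs r = Pmul m r H2 piv2 ` bvecs r"
  shows "Pmul m r H1 piv1 = Pmul m r H2 piv2"
proof -
  interpret c1: cref m r H1 piv1 by (rule c1)
  interpret c2: cref m r H2 piv2 by (rule c2)
  have pivots: "piv1 ` {..<r} = piv2 ` {..<r}"
    unfolding c1.pivots_eq_leading_ones c2.pivots_eq_leading_ones im ..
  have piv_eq: "piv1 j = piv2 j" if "j < r" for j
    using strict_mono_enum_eq[OF c1.piv_strict_mono c2.piv_strict_mono pivots that] .
  have H_eq: "H1 i j = H2 i j" if i: "i < m" and j: "j < r" for i j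
  proof -
    have e: "(\<lambda>i. i = j) \<in> bvecs r" using j by (simp add: bvecs_iff)
    then obtain h where h: "h \<in> bvecs r" "Pmul m r H1 piv1 (\<lambda>i. i = j) = Pmul m r H2 piv2 h"
      using im by blast
    have "h k = (k = j)" for k
    proof (cases "k < r")
      case True
      have "h k = Pmul m r H2 piv2 h (piv2 k)" using c2.Pmul_pivot[OF True] by simp
      also have "\<dots> = Pmul m r H1 piv1 (\<lambda>i. i = j) (piv1 k)" using h(2) piv_eq[OF True] by simp
      also have "\<dots> = (k = j)" using c1.Pmul_pivot[OF True] by simp
      finally show ?thesis .
    next
      case False
      then show ?thesis using h(1) j by (auto simp: bvecs_iff)
    qed
    then have "h = (\<lambda>i. i = j)" by blast
    then show ?thesis using Pmul_unit[OF j, of m H1 piv1 i] Pmul_unit[OF j, of m H2 piv2 i] h(2) i by simp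
  qed
  have nonpiv_eq: "nonpiv m r piv1 = nonpiv m r piv2" unfolding nonpiv_def pivots ..
  have sum_eq: "(\<Sum>j<r. of_bool (H1 i j \<and> u j) :: nat) = (\<Sum>j<r. of_bool (H2 i j \<and> u j))" if "i < m" for i u
    using H_eq[OF that] by (intro sum.cong) auto
  show ?thesis
  proof (intro ext)
    fix u i
    show "Pmul m r H1 piv1 u i = Pmul m r H2 piv2 u i"
      unfolding Pmul_def nonpiv_eq using sum_eq[of i u] by (cases "i < m") simp_all
  qed
qed

section \<open>Chirps with a common support\<close>

lemma chirp_phase_bxor_high_part:
  assumes "is_symr r S"
  shows "chirp_phase m r S b (h \<oplus> high_part r b') = chirp_phase m r S b h * chirp_phase m r S b (high_part r b')"
  using chirp_phase_bxor[OF assms, of m b h "high_part r b'"] by (simp add: bform_def high_part_def)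

lemma chirp_phase_high_part_cong:
  assumes "\<forall>i\<in>{r..<m}. b1 i = b2 i"
  shows "chirp_phase m r S1 b1 (high_part r b1) = chirp_phase m r S2 b2 (high_part r b1)"
proof -
  have "dotp m b1 (high_part r b1) = dotp m b2 (high_part r b1)"
    unfolding dotp_def using assms by (intro sum.cong) (auto simp: high_part_def)
  then show ?thesis by (simp add: chirp_phase_def qform_def high_part_def)
qed

lemma quadratic_phase_chirp_ratio:
  assumes "is_symr r S1" "is_symr r S2"
  shows "quadratic_phase r (\<lambda>h. cnj (chirp_phase m r S1 b1 h) * chirp_phase m r S2 b2 h)
           (\<lambda>h w. (-1) ^ bform r S1 h w * (-1) ^ bform r S2 h w)"
proof
  fix h w h'
  show "cmod (cnj (chirp_phase m r S1 b1 h) * chirp_phase m r S2 b2 h) = 1"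
    by (simp add: norm_mult)
  show "cnj (chirp_phase m r S1 b1 (h \<oplus> w)) * chirp_phase m r S2 b2 (h \<oplus> w)
      = cnj (chirp_phase m r S1 b1 h) * chirp_phase m r S2 b2 h
        * (cnj (chirp_phase m r S1 b1 w) * chirp_phase m r S2 b2 w)
        * of_real ((-1) ^ bform r S1 h w * (-1) ^ bform r S2 h w)"
    by (simp add: chirp_phase_bxor[OF assms(1)] chirp_phase_bxor[OF assms(2)] mult_ac)
  show "(-1::real) ^ bform r S1 h w * (-1) ^ bform r S2 h w = 1
      \<or> (-1::real) ^ bform r S1 h w * (-1) ^ bform r S2 h w = -1"
    by (auto simp: minus_one_power_iff)
  show "(-1::real) ^ bform r S1 h w * (-1) ^ bform r S2 h w = (-1) ^ bform r S1 w h * (-1) ^ bform r S2 w h"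
    using bform_sym[OF assms(1)] bform_sym[OF assms(2)] by simp
  show "(-1::real) ^ bform r S1 (h \<oplus> h') w * (-1) ^ bform r S2 (h \<oplus> h') w
      = (-1) ^ bform r S1 h w * (-1) ^ bform r S2 h w * ((-1) ^ bform r S1 h' w * (-1) ^ bform r S2 h' w)"
    by (simp add: minus_one_power_bform_bxor mult_ac)
qed

context cref
begin

lemma cinner_bssc_same_coset:
  assumes S: "is_symr r S1" "is_symr r S2" and b1: "b1 \<in> bvecs m" and tail: "\<forall>i\<in>{r..<m}. b1 i = b2 i"
  shows "cinner m (bssc m r H piv S1 b1) (bssc m r H piv S2 b2)
     = (\<Sum>h\<in>bvecs r. cnj (chirp_phase m r S1 b1 h) * chirp_phase m r S2 b2 h) / 2 ^ r"
proof -
  define E1 where "E1 = chirp_phase m r S1 b1"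
  define E2 where "E2 = chirp_phase m r S2 b2"
  define C where "C = chirp_coset m r b1"
  define t where "t = high_part r b1"
  have "chirp_coset m r b1 = chirp_coset m r b2" using chirp_coset_eq_iff[OF b1, of r b2] tail by simp
  then have C2: "chirp_coset m r b2 = C" unfolding C_def by simp
  have entry: "cnj (bssc m r H piv S1 b1 (P u)) * bssc m r H piv S2 b2 (P u)
      = (if u \<in> C then cnj (E1 u) * E2 u / 2 ^ r else 0)" if "u \<in> bvecs m" for u
  proof -
    have "cnj (complex_of_real (1 / sqrt (2 ^ r))) * complex_of_real (1 / sqrt (2 ^ r)) = 1 / 2 ^ r"
      by (simp flip: of_real_mult)
    then show ?thesis
      unfolding bssc_Pmul[OF that] C2 E1_def E2_def C_def by (simp add: mult_ac)
  qed
  have shift: "cnj (E1 (h \<oplus> t)) * E2 (h \<oplus> t) = cnj (E1 h) * E2 h" for h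
  proof -
    have "cnj (E1 (h \<oplus> t)) * E2 (h \<oplus> t) = cnj (E1 h) * E2 h * (cnj (E1 t) * E1 t)"
      unfolding E1_def E2_def t_def chirp_phase_bxor_high_part[OF S(1)] chirp_phase_bxor_high_part[OF S(2)]
      using chirp_phase_high_part_cong[OF tail, of S1 S2] by (simp add: mult_ac)
    then show ?thesis unfolding E1_def by (simp add: cnj_mult_self_unimodular)
  qed
  have "cinner m (bssc m r H piv S1 b1) (bssc m r H piv S2 b2)
      = (\<Sum>u\<in>bvecs m. cnj (bssc m r H piv S1 b1 (P u)) * bssc m r H piv S2 b2 (P u))"
    unfolding cinner_def by (rule sum.reindex_bij_betw[OF bij_Pmul, symmetric])
  also have "\<dots> = (\<Sum>u\<in>bvecs m. if u \<in> C then cnj (E1 u) * E2 u / 2 ^ r else 0)"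
    by (rule sum.cong) (simp_all add: entry)
  also have "\<dots> = (\<Sum>u\<in>C. cnj (E1 u) * E2 u / 2 ^ r)"
    using chirp_coset_subset[of m r b1] by (simp add: sum.If_cases Int_absorb1 C_def)
  also have "\<dots> = (\<Sum>h\<in>bvecs r. cnj (E1 (h \<oplus> t)) * E2 (h \<oplus> t) / 2 ^ r)"
    unfolding C_def t_def by (rule sum.reindex_bij_betw[OF bij_betw_chirp_coset[OF rank_le b1], symmetric])
  also have "\<dots> = (\<Sum>h\<in>bvecs r. cnj (E1 h) * E2 h / 2 ^ r)"
    by (simp only: shift)
  finally show ?thesis by (simp add: E1_def E2_def sum_divide_distrib)
qed

lemma bssc_eq_if_chirp_phase_eq:
  assumes S: "is_symr r S1" "is_symr r S2" and b1: "b1 \<in> bvecs m" and tail: "\<forall>i\<in>{r..<m}. b1 i = b2 i"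
    and eq: "\<forall>h\<in>bvecs r. chirp_phase m r S1 b1 h = chirp_phase m r S2 b2 h"
  shows "bssc m r H piv S1 b1 = bssc m r H piv S2 b2"
proof
  fix a show "bssc m r H piv S1 b1 a = bssc m r H piv S2 b2 a"
  proof (cases "a \<in> bvecs m")
    case True
    then obtain u where u: "u \<in> bvecs m" "a = P u" using bij_Pmul by (metis bij_betw_imp_surj_on imageE)
    have "chirp_coset m r b1 = chirp_coset m r b2" using chirp_coset_eq_iff[OF b1, of r b2] tail by simp
    then have C2: "chirp_coset m r b2 = chirp_coset m r b1" by simp
    have "chirp_phase m r S1 b1 u = chirp_phase m r S2 b2 u" if "u \<in> chirp_coset m r b1"
    proof -
      have "u \<in> (\<lambda>h. h \<oplus> high_part r b1) ` bvecs r"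
        using that bij_betw_imp_surj_on[OF bij_betw_chirp_coset[OF rank_le b1]] by simp
      then obtain h where h: "h \<in> bvecs r" "u = h \<oplus> high_part r b1" by (rule imageE)
      show ?thesis unfolding h(2) chirp_phase_bxor_high_part[OF S(1)] chirp_phase_bxor_high_part[OF S(2)]
        using eq h(1) chirp_phase_high_part_cong[OF tail] by simp
    qed
    then show ?thesis unfolding u(2) bssc_Pmul[OF u(1)] C2 by simp
  qed (simp add: bssc_outside)
qed

lemma norm_cinner_bssc_le_same_coset:
  assumes S: "is_symr r S1" "is_symr r S2" and b1: "b1 \<in> bvecs m" and tail: "\<forall>i\<in>{r..<m}. b1 i = b2 i"
    and ne: "bssc m r H piv S1 b1 \<noteq> bssc m r H piv S2 b2"
  shows "cmod (cinner m (bssc m r H piv S1 b1) (bssc m r H piv S2 b2)) \<le> 1 / sqrt 2"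
proof -
  define g where "g h = cnj (chirp_phase m r S1 b1 h) * chirp_phase m r S2 b2 h" for h
  interpret quadratic_phase r g "\<lambda>h w. (-1) ^ bform r S1 h w * (-1) ^ bform r S2 h w"
    unfolding g_def by (rule quadratic_phase_chirp_ratio[OF S])
  have "\<not> (\<forall>h\<in>bvecs r. g h = 1)"
  proof
    assume "\<forall>h\<in>bvecs r. g h = 1"
    moreover have "chirp_phase m r S1 b1 h * g h = chirp_phase m r S2 b2 h" for h
    proof -
      have "chirp_phase m r S1 b1 h * g h
          = (cnj (chirp_phase m r S1 b1 h) * chirp_phase m r S1 b1 h) * chirp_phase m r S2 b2 h"
        unfolding g_def by (simp only: mult_ac)
      then show ?thesis by (simp add: cnj_mult_self_unimodular)
    qed
    ultimately have "\<forall>h\<in>bvecs r. chirp_phase m r S1 b1 h = chirp_phase m r S2 b2 h"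
      by (metis mult_1_right)
    then show False using bssc_eq_if_chirp_phase_eq[OF S b1 tail] ne by blast
  qed
  then have "(cmod (\<Sum>h\<in>bvecs r. g h))\<^sup>2 \<le> (2 ^ r)\<^sup>2 / 2" using norm_sum_bound by blast
  then have "cmod (\<Sum>h\<in>bvecs r. g h) \<le> sqrt ((2 ^ r)\<^sup>2 / 2)"
    by (rule real_le_rsqrt)
  also have "\<dots> = 2 ^ r / sqrt 2"
    by (simp add: real_sqrt_divide)
  finally have "cmod (\<Sum>h\<in>bvecs r. g h) / 2 ^ r \<le> (2 ^ r / sqrt 2) / 2 ^ r"
    by (rule divide_right_mono) simp
  then show ?thesis
    unfolding cinner_bssc_same_coset[OF S b1 tail] g_def[symmetric]
    by (simp add: norm_divide norm_power)
qed

end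

lemma bssc_cong_Pmul:
  assumes "Pmul m r H1 piv1 = Pmul m r H2 piv2"
  shows "bssc m r H1 piv1 S b = bssc m r H2 piv2 S b"
  unfolding bssc_def assms ..

text \<open>Equal supports force equal echelon data, since translating the support to the origin
  gives the column space.\<close>

lemma chirp_support_eq_imp_same_echelon:
  assumes c1: "cref m r1 H1 piv1" "b1 \<in> bvecs m" and c2: "cref m r2 H2 piv2" "b2 \<in> bvecs m"
    and eq: "chirp_support m r1 H1 piv1 b1 = chirp_support m r2 H2 piv2 b2"
  shows "r2 = r1" "Pmul m r1 H1 piv1 = Pmul m r2 H2 piv2" "\<forall>i\<in>{r1..<m}. b1 i = b2 i"
proof -
  interpret c1: cref m r1 H1 piv1 by (rule c1(1))
  interpret c2: cref m r2 H2 piv2 by (rule c2(1))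
  have "(2::nat) ^ r1 = 2 ^ r2"
    using c1.card_chirp_support[OF c1(2)] c2.card_chirp_support[OF c2(2)] eq by simp
  then show r: "r2 = r1" by simp
  define x where "x = Pmul m r1 H1 piv1 (high_part r1 b1)"
  have x: "x \<in> chirp_support m r1 H1 piv1 b1"
    using high_part_in_coset[OF c1(2)] by (auto simp: x_def chirp_support_def)
  have "Pmul m r1 H1 piv1 ` bvecs r1 = Pmul m r2 H2 piv2 ` bvecs r2"
    using c1.bxor_image_chirp_support[OF x] c2.bxor_image_chirp_support[OF x[unfolded eq]] eq by simp
  then show P: "Pmul m r1 H1 piv1 = Pmul m r2 H2 piv2"
    using Pmul_eq_if_same_image c1.cref_axioms c2.cref_axioms r by simp
  have "Pmul m r1 H1 piv1 ` chirp_coset m r1 b1 = Pmul m r1 H1 piv1 ` chirp_coset m r1 b2"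
    using eq P r by (simp add: chirp_support_def)
  then have "chirp_coset m r1 b1 = chirp_coset m r1 b2"
    using inj_on_image_eq_iff[OF c1.inj_on_Pmul chirp_coset_subset chirp_coset_subset] by blast
  then show "\<forall>i\<in>{r1..<m}. b1 i = b2 i"
    using chirp_coset_eq_iff[OF c1(2)] by blast
qed

lemma norm_cinner_bssc_le:
  assumes c1: "r1 \<le> m" "is_cref m r1 H1 piv1" "is_symr r1 S1" "b1 \<in> bvecs m"
    and c2: "r2 \<le> m" "is_cref m r2 H2 piv2" "is_symr r2 S2" "b2 \<in> bvecs m"
    and ne: "bssc m r1 H1 piv1 S1 b1 \<noteq> bssc m r2 H2 piv2 S2 b2"
  shows "cmod (cinner m (bssc m r1 H1 piv1 S1 b1) (bssc m r2 H2 piv2 S2 b2)) \<le> 1 / sqrt 2"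
proof -
  interpret c1: cref m r1 H1 piv1 using c1 by unfold_locales
  interpret c2: cref m r2 H2 piv2 using c2 by unfold_locales
  define A1 where "A1 = chirp_support m r1 H1 piv1 b1"
  define A2 where "A2 = chirp_support m r2 H2 piv2 b2"
  show ?thesis
  proof (cases "A1 = A2")
    case False
    show ?thesis
    proof (rule norm_cinner_le_distinct_supports)
      show "A1 \<subseteq> bvecs m" "A2 \<subseteq> bvecs m" "card A1 = 2 ^ r1" "card A2 = 2 ^ r2"
        "xor_affine A1" "xor_affine A2"
        unfolding A1_def A2_def using c1.chirp_support_subset c2.chirp_support_subset
          c1.card_chirp_support[OF c1(4)] c2.card_chirp_support[OF c2(4)]
          c1.xor_affine_chirp_support c2.xor_affine_chirp_support by simp_all
    qed (use False c1.norm_bssc c2.norm_bssc in \<open>simp_all add: A1_def A2_def\<close>)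
  next
    case True
    note same = chirp_support_eq_imp_same_echelon[OF c1.cref_axioms c1(4) c2.cref_axioms c2(4)
        True[unfolded A1_def A2_def]]
    have w2: "bssc m r2 H2 piv2 S2 b2 = bssc m r1 H1 piv1 S2 b2"
      using bssc_cong_Pmul[OF same(2)[unfolded same(1)]] same(1) by simp
    show ?thesis unfolding w2
      using c1.norm_cinner_bssc_le_same_coset[OF c1(3) _ c1(4) same(3)] c2(3) same(1) ne w2 by simp
  qed
qed

lemma bssc_values:
  assumes "r \<le> m" "a \<in> bvecs m"
  shows "bssc m r H piv S b a
    \<in> (\<lambda>(r, k, e). of_real (1 / sqrt (2 ^ r)) * \<i> ^ k * of_bool e) ` ({..m} \<times> {..<4} \<times> UNIV)"
proof -
  define u where "u = (THE u. u \<in> bvecs m \<and> Pmul m r H piv u = a)"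
  define n :: nat where "n = (\<Sum>i<r. \<Sum>j<r. of_bool (S i j \<and> u i \<and> u j)) + 2 * (\<Sum>i<m. of_bool (b i \<and> u i))"
  define e where "e = (\<forall>i\<in>{r..<m}. b i = u i)"
  have "bssc m r H piv S b a = of_real (1 / sqrt (2 ^ r)) * \<i> ^ n * of_bool e"
    unfolding bssc_def Let_def u_def[symmetric] n_def[symmetric] e_def using assms(2)
    by (simp add: prod_of_bool)
  also have "\<dots> = of_real (1 / sqrt (2 ^ r)) * \<i> ^ (n mod 4) * of_bool e"
    by (subst power_i_mod4) (rule refl)
  finally show ?thesis
    using assms(1) by (auto intro!: image_eqI[where x="(r, n mod 4, e)"])
qed

lemma finite_V_BSSC: "finite (V_BSSC m)"
proof (rule finite_subset)
  define vals where
    "vals = (\<lambda>(r, k, e). of_real (1 / sqrt (2 ^ r)) * \<i> ^ k * of_bool e) ` ({..m} \<times> {..<4} \<times> (UNIV :: bool set))"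
  show "V_BSSC m \<subseteq> {f. \<forall>x. (x \<in> bvecs m \<longrightarrow> f x \<in> vals) \<and> (x \<notin> bvecs m \<longrightarrow> f x = 0)}"
  proof
    fix f assume "f \<in> V_BSSC m"
    then obtain r H piv S b where "r \<le> m" "f = bssc m r H piv S b"
      unfolding V_BSSC_def by blast
    then show "f \<in> {f. \<forall>x. (x \<in> bvecs m \<longrightarrow> f x \<in> vals) \<and> (x \<notin> bvecs m \<longrightarrow> f x = 0)}"
      using bssc_values[of r m] bssc_outside unfolding vals_def by simp
  qed
  show "finite {f. \<forall>x. (x \<in> bvecs m \<longrightarrow> f x \<in> vals) \<and> (x \<notin> bvecs m \<longrightarrow> f x = 0)}"
    by (rule finite_set_of_finite_funs) (simp_all add: vals_def)
qed

lemma min_chordal_eq: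
  assumes "finite V"
    and le: "\<forall>w1\<in>V. \<forall>w2\<in>V. w1 \<noteq> w2 \<longrightarrow> cmod (cinner m w1 w2) \<le> 1 / sqrt 2"
    and eq: "\<exists>w1\<in>V. \<exists>w2\<in>V. w1 \<noteq> w2 \<and> cmod (cinner m w1 w2) = 1 / sqrt 2"
  shows "min_chordal m V = 1 / sqrt 2"
  unfolding min_chordal_def
proof (rule Min_eqI)
  let ?d = "\<lambda>w1 w2. sqrt (1 - (cmod (cinner m w1 w2))\<^sup>2)"
  have "{?d w1 w2 |w1 w2. w1 \<in> V \<and> w2 \<in> V \<and> w1 \<noteq> w2} \<subseteq> (\<lambda>(w1, w2). ?d w1 w2) ` (V \<times> V)"
    by auto
  then show "finite {?d w1 w2 |w1 w2. w1 \<in> V \<and> w2 \<in> V \<and> w1 \<noteq> w2}"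
    using assms(1) by (simp add: finite_subset)
  have chordal: "?d w1 w2 = 1 / sqrt 2" if "cmod (cinner m w1 w2) = 1 / sqrt 2" for w1 w2
    using that by (simp add: power_divide real_sqrt_divide)
  show "1 / sqrt 2 \<le> y" if y: "y \<in> {?d w1 w2 |w1 w2. w1 \<in> V \<and> w2 \<in> V \<and> w1 \<noteq> w2}" for y
  proof -
    obtain w1 w2 where w: "w1 \<in> V" "w2 \<in> V" "w1 \<noteq> w2" "y = ?d w1 w2"
      using y by blast
    then have "(cmod (cinner m w1 w2))\<^sup>2 \<le> 1 / 2"
      using le power_mono[of "cmod (cinner m w1 w2)" "1 / sqrt 2" 2] by (simp add: power_divide)
    then have "sqrt (1 / 2) \<le> y" unfolding w(4) by (intro real_sqrt_le_mono) simp
    then show ?thesis by (simp add: real_sqrt_divide)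
  qed
  from eq obtain w1 w2 where "w1 \<in> V" "w2 \<in> V" "w1 \<noteq> w2" "cmod (cinner m w1 w2) = 1 / sqrt 2"
    by blast
  then show "1 / sqrt 2 \<in> {?d w1 w2 |w1 w2. w1 \<in> V \<and> w2 \<in> V \<and> w1 \<noteq> w2}"
    using chordal by fastforce
qed

section \<open>Attaining the bound\<close>

lemma cref_identity: "cref m m (\<lambda>i j. i = j \<and> i < m) id"
  by unfold_locales (auto simp: is_cref_def)

lemma bssc_identity:
  assumes "u \<in> bvecs m"
  shows "bssc m m (\<lambda>i j. i = j \<and> i < m) id S b u = of_real (1 / sqrt (2 ^ m)) * chirp_phase m m S b u"
proof -
  interpret cref m m "\<lambda>i j. i = j \<and> i < m" id by (rule cref_identity)
  have "P u = u"
  proof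
    fix i
    show "P u i = u i"
    proof (cases "i < m")
      case True then show ?thesis using Pmul_pivot[OF True, of u] by simp
    next
      case False then show ?thesis using assms unfolding bvecs_iff by (auto simp: Pmul_def)
    qed
  qed
  then show ?thesis using bssc_Pmul[OF assms, of S b] assms by (simp add: chirp_coset_def)
qed
lemma card_bvecs_first_bit:
  assumes "m \<ge> 1"
  shows "2 * card {u \<in> bvecs m. u 0 = c} = 2 ^ m"
proof -
  define e0 :: "nat \<Rightarrow> bool" where "e0 = (\<lambda>i. i = 0)"
  have e0: "e0 \<in> bvecs m" "e0 0" using assms by (simp_all add: bvecs_iff e0_def)
  have "bij_betw (\<lambda>u. u \<oplus> e0) {u \<in> bvecs m. u 0 = c} {u \<in> bvecs m. u 0 = (\<not> c)}"
    by (rule bij_betw_byWitness[where f'="\<lambda>u. u \<oplus> e0"]) (use e0 in \<open>auto intro!: bvecs_bxor\<close>)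
  then have "card {u \<in> bvecs m. u 0 = c} = card {u \<in> bvecs m. u 0 = (\<not> c)}"
    by (rule bij_betw_same_card)
  moreover have "card {u \<in> bvecs m. u 0 = c} + card {u \<in> bvecs m. u 0 = (\<not> c)} = card (bvecs m)"
    by (subst card_Un_disjoint[symmetric]) (auto intro: arg_cong[where f=card])
  ultimately show ?thesis by (simp add: card_bvecs)
qed

lemma qform_first_entry:
  assumes "m \<ge> 1"
  shows "qform m (\<lambda>i j. i = 0 \<and> j = 0) u = of_bool (u 0)"
proof -
  have "{..<m} \<inter> {j. j = 0} = {0}" using assms by auto
  then have one: "(\<Sum>j<m. of_bool (j = 0) :: nat) = 1" by simp
  have "qform m (\<lambda>i j. i = 0 \<and> j = 0) u = (\<Sum>i<m. \<Sum>j<m. of_bool (i = 0) * of_bool (j = 0) * of_bool (u 0))"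
    unfolding qform_def by (rule sum.cong[OF refl])+ (auto simp flip: neq0_conv)
  also have "\<dots> = of_bool (u 0)"
    by (simp add: sum_distrib_left[symmetric] sum_distrib_right[symmetric] one del: sum_of_bool_eq)
  finally show ?thesis .
qed

lemma sum_bvecs_first_bit:
  assumes "m \<ge> 1"
  shows "2 * (\<Sum>u\<in>bvecs m. if u 0 then \<i> else 1) = 2 ^ m * (1 + \<i>)"
proof -
  have card: "2 * of_nat (card {u \<in> bvecs m. u 0 = c}) = (2 ^ m :: complex)" for c
    using arg_cong[OF card_bvecs_first_bit[OF assms, of c], of "of_nat :: nat \<Rightarrow> complex"] by simp
  have "2 * (\<Sum>u\<in>bvecs m. if u 0 then \<i> else 1)
      = (2 * of_nat (card {u \<in> bvecs m. u 0 = True})) * \<i> + 2 * of_nat (card {u \<in> bvecs m. u 0 = False})"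
    by (simp add: sum.If_cases Int_def conj_commute algebra_simps)
  also have "\<dots> = 2 ^ m * (1 + \<i>)"
    unfolding card by (simp add: algebra_simps)
  finally show ?thesis .
qed

lemma V_BC_attains_bound:
  assumes "m \<ge> 1"
  shows "\<exists>w1\<in>V_BC m. \<exists>w2\<in>V_BC m. w1 \<noteq> w2 \<and> cmod (cinner m w1 w2) = 1 / sqrt 2"
proof -
  define Hid where "Hid i j = (i = j \<and> i < m)" for i j :: nat
  define S where "S i j = (i = 0 \<and> j = 0)" for i j :: nat
  define w1 where "w1 = bssc m m Hid id (\<lambda>_ _. False) (\<lambda>_. False)"
  define w2 where "w2 = bssc m m Hid id S (\<lambda>_. False)"
  define c where "c = complex_of_real (1 / sqrt (2 ^ m))"
  have in_V_BC: "bssc m m Hid id S' (\<lambda>_. False) \<in> V_BC m" if "is_symr m S'" for S'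
    unfolding V_BC_def Hid_def using cref_identity[of m] that by (force simp: cref_def)
  have w1: "w1 u = c" if "u \<in> bvecs m" for u
    using bssc_identity[OF that] unfolding w1_def Hid_def c_def
    by (simp add: chirp_phase_def qform_def dotp_def)
  have w2: "w2 u = c * (if u 0 then \<i> else 1)" if "u \<in> bvecs m" for u
    using bssc_identity[OF that] unfolding w2_def Hid_def c_def S_def
    by (simp add: chirp_phase_def qform_first_entry[OF assms] dotp_def)
  have cc: "cnj c * c = 1 / 2 ^ m"
    unfolding c_def by (simp flip: of_real_mult)
  have "cinner m w1 w2 = cnj c * c * (\<Sum>u\<in>bvecs m. if u 0 then \<i> else 1)"
    unfolding cinner_def sum_distrib_left by (intro sum.cong) (simp_all add: w1 w2 mult.assoc)
  also have "\<dots> = (1 + \<i>) / 2"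
    using sum_bvecs_first_bit[OF assms] unfolding cc by (simp add: field_simps)
  also have "cmod ((1 + \<i>) / 2) = 1 / sqrt 2"
    by (simp add: norm_divide cmod_def real_sqrt_divide field_simps)
  finally have "cmod (cinner m w1 w2) = 1 / sqrt 2" .
  moreover have "w1 \<noteq> w2"
  proof
    have e: "(\<lambda>i. i = 0) \<in> bvecs m" using assms by (simp add: bvecs_iff)
    assume "w1 = w2"
    then have "c = c * \<i>" using w1[OF e] w2[OF e] by simp
    then show False by (simp add: c_def)
  qed
  moreover have "w1 \<in> V_BC m" "w2 \<in> V_BC m"
    unfolding w1_def w2_def by (auto intro!: in_V_BC simp: is_symr_def S_def)
  ultimately show ?thesis by blast
qed

theorem proposition1:
  fixes m :: nat
  assumes "m \<ge> 1"
  shows "(\<forall>w1\<in>V_BSSC m. \<forall>w2\<in>V_BSSC m. w1 \<noteq> w2 \<longrightarrow> cmod (cinner m w1 w2) \<le> 1 / sqrt 2)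
       \<and> (\<exists>w1\<in>V_BSSC m. \<exists>w2\<in>V_BSSC m. w1 \<noteq> w2 \<and> cmod (cinner m w1 w2) = 1 / sqrt 2)
       \<and> min_chordal m (V_BSSC m) = 1 / sqrt 2
       \<and> min_chordal m (V_BC m) = 1 / sqrt 2"
proof -
  have BC_sub: "V_BC m \<subseteq> V_BSSC m"
    unfolding V_BC_def V_BSSC_def by blast
  have le: "\<forall>w1\<in>V_BSSC m. \<forall>w2\<in>V_BSSC m. w1 \<noteq> w2 \<longrightarrow> cmod (cinner m w1 w2) \<le> 1 / sqrt 2"
    unfolding V_BSSC_def using norm_cinner_bssc_le by blast
  have eq: "\<exists>w1\<in>V_BC m. \<exists>w2\<in>V_BC m. w1 \<noteq> w2 \<and> cmod (cinner m w1 w2) = 1 / sqrt 2"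
    by (rule V_BC_attains_bound[OF assms])
  have "min_chordal m (V_BC m) = 1 / sqrt 2"
    using min_chordal_eq[of "V_BC m"] finite_subset[OF BC_sub finite_V_BSSC] le eq BC_sub by blast
  moreover have "min_chordal m (V_BSSC m) = 1 / sqrt 2"
    using min_chordal_eq[OF finite_V_BSSC le] eq BC_sub by blast
  ultimately show ?thesis using le eq BC_sub by blast
qed

end
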